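(* Under the hypotheses of the following setting: $f:\mathbb{R}\to(0,+\infty)$ Lipschitz continuous and continuously differentiable with $f>0$, $f'\le0$, $\lim_{x\to+\infty}f(x)=0$; $r>0$; $A:(-\infty,r)\to\mathbb{R}$ continuous; and $\tau:[0,r)\to[0,\infty)$ a $C^1$ solution of $\tau'(t)=1-\frac{f(A(t))}{f(A(t-\tau(t)))}$ for $t\in[0,r)$ with $\tau(0)=\tau_0\ge0$. Then: if $\tau_0>0$, then $\tau(t)>0$ for all $t\in[0,r)$; and if $\tau_0=0$, then $\tau(t)=0$ for all $t\in[0,r)$. *)

theory Defs
  imports "HOL-Analysis.Analysis"
begin

end

theory Submission
  imports Defs
begin

text \<open>Let \<open>F = f \<circ> A\<close> and let \<open>G\<close> be a primitive of \<open>F\<close>. Along a solution, the delayed time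
  \<open>\<phi> t = t - \<tau> t\<close> has derivative \<open>F t / F (\<phi> t)\<close>, so \<open>G (\<phi> t) - G t\<close> has derivative zero:
  the integral of \<open>F\<close> over \<open>[t - \<tau> t, t]\<close> is independent of \<open>t\<close>. As \<open>F > 0\<close>, that integral
  vanishes exactly when \<open>\<tau> t = 0\<close>, so the delay is zero at some time iff it is zero at all times.\<close>

lemma integral_has_real_derivative_interior:
  fixes F :: "real \<Rightarrow> real"
  assumes "continuous_on {a..c} F" and "x \<in> {a<..<c}"
  shows "((\<lambda>u. integral {a..u} F) has_real_derivative F x) (at x)"
proof -
  have "((\<lambda>u. integral {a..u} F) has_real_derivative F x) (at x within {a..c})"
    using assms by (intro integral_has_real_derivative) auto
  moreover have "x \<in> interior {a..c}" using assms(2) by simp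
  ultimately show ?thesis by (metis at_within_interior)
qed

lemma integral_strict_mono_pos:
  fixes F :: "real \<Rightarrow> real"
  assumes "continuous_on {a..c} F" and "\<And>x. x \<in> {a..c} \<Longrightarrow> F x > 0"
    and "a < x" "x < y" "y < c"
  shows "integral {a..x} F < integral {a..y} F"
proof (rule DERIV_pos_imp_increasing[of x y "\<lambda>u. integral {a..u} F"])
  show "x < y" by fact
next
  fix z assume "x \<le> z" "z \<le> y"
  with assms have "((\<lambda>u. integral {a..u} F) has_real_derivative F z) (at z)" "F z > 0"
    by (auto intro: integral_has_real_derivative_interior)
  then show "\<exists>d. ((\<lambda>u. integral {a..u} F) has_real_derivative d) (at z) \<and> d > 0"
    by blast
qed

lemma delayed_integral_constant:
  fixes F \<phi> :: "real \<Rightarrow> real"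
  assumes F_cont: "continuous_on {a..c} F" and F_pos: "\<And>x. x \<in> {a..c} \<Longrightarrow> F x > 0"
    and t_in: "\<And>t. t \<in> {0..b} \<Longrightarrow> t \<in> {a<..<c}"
    and \<phi>_in: "\<And>t. t \<in> {0..b} \<Longrightarrow> \<phi> t \<in> {a<..<c}"
    and \<phi>_deriv: "\<And>t. t \<in> {0..b} \<Longrightarrow>
      (\<phi> has_real_derivative F t / F (\<phi> t)) (at t within {0..b})"
    and t: "t \<in> {0..b}"
  defines "G \<equiv> \<lambda>u. integral {a..u} F"
  shows "G (\<phi> t) - G t = G (\<phi> 0) - G 0"
proof -
  have "\<exists>k. \<forall>t\<in>{0..b}. G (\<phi> t) - G t = k"
  proof (rule has_field_derivative_zero_constant)
    fix t assume t: "t \<in> {0..b}"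
    have G_deriv: "(G has_real_derivative F u) (at u)" if "u \<in> {a<..<c}" for u
      unfolding G_def using F_cont that by (rule integral_has_real_derivative_interior)
    have "((\<lambda>t. G (\<phi> t)) has_real_derivative F (\<phi> t) * (F t / F (\<phi> t)))
        (at t within {0..b})"
      using G_deriv[OF \<phi>_in[OF t]] \<phi>_deriv[OF t] by (rule DERIV_chain2)
    moreover have "(G has_real_derivative F t) (at t within {0..b})"
      using G_deriv[OF t_in[OF t]] by (rule has_field_derivative_at_within)
    ultimately have "((\<lambda>t. G (\<phi> t) - G t) has_real_derivative
        F (\<phi> t) * (F t / F (\<phi> t)) - F t) (at t within {0..b})"
      by (rule DERIV_diff)
    moreover have "F (\<phi> t) * (F t / F (\<phi> t)) - F t = 0"
      using F_pos[of "\<phi> t"] \<phi>_in[OF t] by simp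
    ultimately show "((\<lambda>t. G (\<phi> t) - G t) has_real_derivative 0) (at t within {0..b})"
      by simp
  qed auto
  then show ?thesis using t by fastforce
qed

lemma delay_ode_zero_iff:
  fixes F \<tau> :: "real \<Rightarrow> real"
  assumes F_cont: "continuous_on {..<r} F" and F_pos: "\<And>x. x < r \<Longrightarrow> F x > 0"
    and \<tau>_nonneg: "\<And>t. t \<in> {0..<r} \<Longrightarrow> \<tau> t \<ge> 0"
    and \<tau>_ode: "\<And>t. t \<in> {0..<r} \<Longrightarrow>
      (\<tau> has_real_derivative 1 - F t / F (t - \<tau> t)) (at t within {0..<r})"
    and b: "b \<in> {0..<r}"
  shows "\<tau> b = 0 \<longleftrightarrow> \<tau> 0 = 0"
proof -
  define \<phi> where "\<phi> t = t - \<tau> t" for t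
  have "continuous_on {0..<r} \<tau>"
    using \<tau>_ode by (meson DERIV_continuous continuous_on_eq_continuous_within)
  then have "continuous_on {0..b} \<tau>" by (rule continuous_on_subset) (use b in auto)
  then have "compact (\<phi> ` {0..b})"
    by (auto simp: \<phi>_def intro!: compact_continuous_image continuous_intros)
  then obtain B where B: "\<And>t. t \<in> {0..b} \<Longrightarrow> \<bar>\<phi> t\<bar> \<le> B"
    by (meson bounded_real compact_imp_bounded image_eqI)
  \<comment> \<open>The primitive needs a base point \<open>a\<close> below every delayed time \<open>\<phi> t\<close>, \<open>t \<in> [0, b]\<close>.\<close>
  define a where "a = - B - 1"
  define c where "c = (b + r) / 2"
  have c: "b < c" "c < r" using b by (auto simp: c_def)
  have F_cont': "continuous_on {a..c} F" using F_cont by (rule continuous_on_subset) (use c in auto)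
  have F_pos': "F x > 0" if "x \<in> {a..c}" for x using F_pos that c by simp
  have \<phi>_le: "\<phi> t \<le> t" if "t \<in> {0..b}" for t
    using \<tau>_nonneg[of t] that b by (simp add: \<phi>_def)
  have t_in: "t \<in> {a<..<c}" and \<phi>_in: "\<phi> t \<in> {a<..<c}" if "t \<in> {0..b}" for t
    using B[of 0] B[OF that] \<phi>_le[OF that] that c by (auto simp: a_def)
  have \<phi>_deriv: "(\<phi> has_real_derivative F t / F (\<phi> t)) (at t within {0..b})"
    if "t \<in> {0..b}" for t
  proof -
    have "(\<phi> has_real_derivative 1 - (1 - F t / F (t - \<tau> t))) (at t within {0..<r})"
      unfolding \<phi>_def using that b by (intro derivative_intros \<tau>_ode) auto
    then have "(\<phi> has_real_derivative F t / F (\<phi> t)) (at t within {0..<r})"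
      by (simp add: \<phi>_def)
    then show ?thesis by (rule has_field_derivative_subset) (use b in auto)
  qed
  define G where "G u = integral {a..u} F" for u
  have G_eq: "G (\<phi> b) - G b = G (\<phi> 0) - G 0"
    unfolding G_def using F_cont' F_pos' t_in \<phi>_in \<phi>_deriv b
    by (intro delayed_integral_constant) auto
  have zero_iff: "\<tau> t = 0 \<longleftrightarrow> G (\<phi> t) - G t = 0" if "t \<in> {0..b}" for t
  proof -
    have "\<phi> t < t \<Longrightarrow> G (\<phi> t) < G t"
      using integral_strict_mono_pos[OF F_cont' F_pos'] t_in[OF that] \<phi>_in[OF that]
      by (simp add: G_def)
    then show ?thesis using \<phi>_le[OF that] unfolding \<phi>_def by force
  qed
  show ?thesis
    using zero_iff[of b] zero_iff[of 0] G_eq b by auto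
qed

theorem mainTheorem3:
  fixes f :: "real \<Rightarrow> real" and A :: "real \<Rightarrow> real" and \<tau> :: "real \<Rightarrow> real"
    and r \<tau>0 :: real
  assumes f_lip: "\<exists>L. L-lipschitz_on UNIV f"
    and f_diff: "\<And>x. f differentiable (at x)"
    and f_C1: "continuous_on UNIV (deriv f)"
    and f_pos: "\<And>x. f x > 0"
    and f_dec: "\<And>x. deriv f x \<le> 0"
    and f_lim: "(f \<longlongrightarrow> 0) at_top"
    and r_pos: "r > 0"
    and A_cont: "continuous_on {..<r} A"
    and tau_nonneg: "\<And>t. t \<in> {0..<r} \<Longrightarrow> \<tau> t \<ge> 0"
    and tau_C1: "continuous_on {0..<r} (\<lambda>t. 1 - f (A t) / f (A (t - \<tau> t)))"
    and tau_ode: "\<And>t. t \<in> {0..<r} \<Longrightarrow>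
        (\<tau> has_real_derivative (1 - f (A t) / f (A (t - \<tau> t)))) (at t within {0..<r})"
    and tau_init: "\<tau> 0 = \<tau>0" and tau0_nonneg: "\<tau>0 \<ge> 0"
  shows "(\<tau>0 > 0 \<longrightarrow> (\<forall>t\<in>{0..<r}. \<tau> t > 0)) \<and>
         (\<tau>0 = 0 \<longrightarrow> (\<forall>t\<in>{0..<r}. \<tau> t = 0))"
proof -
  have "continuous_on UNIV f"
    using f_diff by (meson continuous_at_imp_continuous_on differentiable_imp_continuous_within)
  then have "continuous_on {..<r} (\<lambda>x. f (A x))"
    using A_cont by (rule continuous_on_compose2) auto
  then have "\<tau> t = 0 \<longleftrightarrow> \<tau>0 = 0" if "t \<in> {0..<r}" for t
    using delay_ode_zero_iff[of r "\<lambda>x. f (A x)" \<tau> t] f_pos tau_nonneg tau_ode that tau_init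
    by auto
  then show ?thesis using tau_nonneg by force
qed

end
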